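(* There exist an absolute constant $\varepsilon_0\in(0,\frac12)$ and an absolute constant $C>0$ such that the following holds. Let $0<\varepsilon<\varepsilon_0$, let $n\in\mathbb{N}$ with $n>10^5\varepsilon^{-9/2}$, and let $A\subset\mathbb{N}$ satisfy $$\forall x\in\llbracket n^{1/3},\varepsilon n\rrbracket,\ \forall m\in\llbracket 2x,2\varepsilon^{-1}x\rrbracket:\quad \big|A\cap\llbracket m-2x,m-x\rrbracket\big|>\varepsilon x^{2/3}\log\Big(\frac nx\Big).$$ Then there exists $B\subset\llbracket n^{1/3},2\varepsilon n\rrbracket$ with $|B|\le C\varepsilon^{-2/3}n^{1/3}$ and $$\forall t\in\llbracket 2n^{1/3},2n\rrbracket:\quad \big|\llbracket 2n^{1/3},t\rrbracket\setminus(A+B)\big|\le\varepsilon t.$$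
   Context: For real $u\le v$, $\llbracket u,v\rrbracket$ denotes the set of integers in $[u,v]$. $A+B=\{a+b:a\in A,b\in B\}$. *)

theory Defs
  imports "HOL-Analysis.Analysis"
begin

definition nat_ival :: "real \<Rightarrow> real \<Rightarrow> nat set" where
  "nat_ival u v = {k::nat. u \<le> real k \<and> real k \<le> v}"

definition sumset :: "nat set \<Rightarrow> nat set \<Rightarrow> nat set" where
  "sumset A B = {a + b | a b. a \<in> A \<and> b \<in> B}"

end

theory Submission
  imports Defs
begin

(* Fix a scale x in [n^(1/3), eps n]. The hypothesis says that every m in the window [2x, 2x/eps]
   has more than eps x^(2/3) ln(n/x) >= eps x^(2/3) ln(1/eps) representations m = a + b with a in A
   and b in [x, 2x]. By averaging, some b covers that fraction of any set of points of the window,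
   so about 3 x^(1/3)/eps greedily chosen b leave at most a fraction eps^3 of the window outside
   A + B_x. Along the scales 8^j ceil(n^(1/3)), followed by the last scale floor(eps n),
   consecutive windows overlap, the numbers of uncovered points form a geometric series dominated
   by the current scale, and the sizes 7 x^(1/3)/eps of the sets B_x sum to at most
   21 eps^(-2/3) n^(1/3). *)

lemma sumset_Un: "sumset A (B \<union> B') = sumset A B \<union> sumset A B'"
  unfolding sumset_def by blast

lemma sumset_mono: "B \<subseteq> B' \<Longrightarrow> sumset A B \<subseteq> sumset A B'"
  unfolding sumset_def by blast

lemma mem_sumset_singleton: "y \<in> sumset A {b} \<longleftrightarrow> b \<le> y \<and> y - b \<in> A"
  unfolding sumset_def by force

lemma finite_nat_ival [simp]: "finite (nat_ival u v)"
proof (rule finite_subset)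
  show "nat_ival u v \<subseteq> {..nat \<lfloor>v\<rfloor>}"
    unfolding nat_ival_def by (auto simp: le_nat_floor)
qed simp

lemma card_le_card_Un:
  assumes "A \<subseteq> B \<union> C" "finite B" "finite C"
  shows "card A \<le> card B + card C"
  using card_mono[OF _ assms(1)] card_Un_le[of B C] assms(2,3) by simp

lemma card_nat_ival_le: "real (card (nat_ival u v)) \<le> max 0 (v - u + 1)"
proof (cases "v < 0")
  case True
  then have "nat_ival u v = {}"
    unfolding nat_ival_def by auto
  then show ?thesis by simp
next
  case False
  have "nat_ival u v \<subseteq> {nat \<lceil>u\<rceil>..nat \<lfloor>v\<rfloor>}"
    unfolding nat_ival_def by (auto simp: le_nat_floor nat_le_iff ceiling_le_iff)
  then have "card (nat_ival u v) \<le> Suc (nat \<lfloor>v\<rfloor>) - nat \<lceil>u\<rceil>"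
    using card_mono[of "{nat \<lceil>u\<rceil>..nat \<lfloor>v\<rfloor>}"] by simp
  moreover have "real (nat \<lfloor>v\<rfloor>) \<le> v"
    using False by (simp add: of_nat_floor)
  moreover have "u \<le> real (nat \<lceil>u\<rceil>)"
    by (rule of_nat_ceiling)
  ultimately show ?thesis
    by (simp add: of_nat_diff_if split: if_splits)
qed

lemma exists_translate_covering:
  fixes U S A :: "nat set" and \<delta> :: real
  assumes "finite U" "finite S" "S \<noteq> {}"
    and reps: "\<forall>y\<in>U. \<delta> * card S \<le> card {b\<in>S. y \<in> sumset A {b}}"
  shows "\<exists>b\<in>S. \<delta> * card U \<le> card (U \<inter> sumset A {b})"
proof (rule ccontr)
  assume "\<not> ?thesis"
  then have "(\<Sum>b\<in>S. real (card (U \<inter> sumset A {b}))) < (\<Sum>b\<in>S. \<delta> * card U)"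
    using \<open>finite S\<close> \<open>S \<noteq> {}\<close> by (intro sum_strict_mono) (simp_all add: not_le)
  also have "\<dots> = (\<Sum>y\<in>U. \<delta> * card S)"
    by simp
  also have "\<dots> \<le> (\<Sum>y\<in>U. real (card {b\<in>S. y \<in> sumset A {b}}))"
    using reps by (intro sum_mono) blast
  also have "(\<Sum>y\<in>U. card {b\<in>S. y \<in> sumset A {b}}) = (\<Sum>b\<in>S. card {y\<in>U. y \<in> sumset A {b}})"
    by (rule sum_multicount_gen[OF \<open>finite U\<close> \<open>finite S\<close>]) simp
  then have "(\<Sum>y\<in>U. real (card {b\<in>S. y \<in> sumset A {b}})) = (\<Sum>b\<in>S. real (card (U \<inter> sumset A {b})))"
    unfolding Int_def by (metis (no_types) of_nat_sum)
  finally show False by simp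
qed

lemma greedy_sumset_cover:
  fixes U S A :: "nat set" and \<delta> :: real
  assumes "finite U" "finite S" "S \<noteq> {}"
    and reps: "\<forall>y\<in>U. \<delta> * card S \<le> card {b\<in>S. y \<in> sumset A {b}}"
  shows "\<exists>B\<subseteq>S. card B \<le> k \<and> card (U - sumset A B) \<le> exp (- (\<delta> * k)) * card U"
proof (induction k)
  case 0
  show ?case by (intro exI[of _ "{}"]) (auto simp: sumset_def)
next
  case (Suc k)
  then obtain B where B: "B \<subseteq> S" "card B \<le> k"
    and uncovered: "card (U - sumset A B) \<le> exp (- (\<delta> * k)) * card U"
    by blast
  define U' where "U' = U - sumset A B"
  have "finite U'"
    using \<open>finite U\<close> by (simp add: U'_def)
  then obtain b where "b \<in> S" and b: "\<delta> * card U' \<le> card (U' \<inter> sumset A {b})"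
    using exists_translate_covering[OF \<open>finite U'\<close> \<open>finite S\<close> \<open>S \<noteq> {}\<close>, of \<delta> A] reps
    by (auto simp: U'_def)
  have "U - sumset A (insert b B) = U' - U' \<inter> sumset A {b}"
    unfolding U'_def insert_is_Un[of b B] sumset_Un by blast
  then have "real (card (U - sumset A (insert b B))) = real (card U') - card (U' \<inter> sumset A {b})"
    using \<open>finite U'\<close> by (simp add: card_Diff_subset of_nat_diff card_mono)
  also have "\<dots> \<le> (1 - \<delta>) * card U'"
    using b by (simp add: algebra_simps)
  also have "\<dots> \<le> exp (- \<delta>) * card U'"
    using exp_ge_add_one_self[of "- \<delta>"] by (intro mult_right_mono) auto
  also have "\<dots> \<le> exp (- \<delta>) * (exp (- (\<delta> * k)) * card U)"
    using uncovered by (simp add: U'_def)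
  also have "\<dots> = exp (- (\<delta> * Suc k)) * card U"
    by (simp add: algebra_simps flip: exp_add)
  finally have "card (U - sumset A (insert b B)) \<le> exp (- (\<delta> * Suc k)) * card U" .
  moreover have "card (insert b B) \<le> Suc k"
    using B(2) finite_subset[OF B(1) \<open>finite S\<close>] by (simp add: card_insert_if)
  ultimately show ?case
    using B(1) \<open>b \<in> S\<close> by (intro exI[of _ "insert b B"] conjI) auto
qed

lemma card_window_le_translates:
  fixes A :: "nat set" and m x :: nat
  shows "card (A \<inter> nat_ival (real m - 2 * real x) (real m - real x))
    \<le> card {b\<in>{x..2*x}. m \<in> sumset A {b}}"
proof (rule card_inj_on_le[where f = "\<lambda>a. m - a"])
  show "inj_on (\<lambda>a. m - a) (A \<inter> nat_ival (real m - 2 * real x) (real m - real x))"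
    by (rule inj_onI) (auto simp: nat_ival_def)
  show "(\<lambda>a. m - a) ` (A \<inter> nat_ival (real m - 2 * real x) (real m - real x))
    \<subseteq> {b\<in>{x..2*x}. m \<in> sumset A {b}}"
    by (auto simp: nat_ival_def mem_sumset_singleton)
qed simp

definition scale_cover :: "real \<Rightarrow> nat set \<Rightarrow> nat \<Rightarrow> nat set \<Rightarrow> bool" where
  "scale_cover eps A x Bx \<longleftrightarrow> Bx \<subseteq> {x..2*x} \<and> real (card Bx) \<le> 7 * real x powr (1/3) / eps \<and>
     real (card (nat_ival (2 * real x) (2 * real x / eps) - sumset A Bx)) \<le> eps * real x / 2"

lemma greedy_window_cover:
  fixes eps \<delta> :: real and x k :: nat and A :: "nat set"
  assumes eps: "0 < eps" "eps \<le> 1/4" and "1 \<le> x"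
    and reps: "\<forall>y\<in>nat_ival (2 * real x) (2 * real x / eps).
      \<delta> * (x + 1) \<le> card {b\<in>{x..2*x}. y \<in> sumset A {b}}"
    and k: "3 * ln (1 / eps) \<le> \<delta> * k"
  shows "\<exists>B\<subseteq>{x..2*x}. card B \<le> k \<and>
    real (card (nat_ival (2 * real x) (2 * real x / eps) - sumset A B)) \<le> eps * real x / 2"
proof -
  define U where "U = nat_ival (2 * real x) (2 * real x / eps)"
  obtain B where "B \<subseteq> {x..2*x}" "card B \<le> k"
    and uncovered: "card (U - sumset A B) \<le> exp (- (\<delta> * k)) * card U"
    using greedy_sumset_cover[of U "{x..2*x}" \<delta> A k] reps by (auto simp: U_def)
  have "exp (- (\<delta> * k)) \<le> exp (- (3 * ln (1 / eps)))"
    using k by simp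
  also have "\<dots> = eps powr 3"
    using eps by (simp add: powr_def ln_div)
  also have "\<dots> = eps ^ 3"
    using eps by (simp add: powr_numeral)
  finally have decay: "exp (- (\<delta> * k)) \<le> eps ^ 3" .
  have "0 \<le> 2 * real x / eps" "1 \<le> 2 * real x"
    using \<open>1 \<le> x\<close> eps by simp_all
  then have card_U: "card U \<le> 2 * real x / eps"
    using card_nat_ival_le[of "2 * real x" "2 * real x / eps"] unfolding U_def by linarith
  note uncovered
  also have "exp (- (\<delta> * k)) * card U \<le> eps ^ 3 * card U"
    using decay by (rule mult_right_mono) simp
  also have "\<dots> \<le> eps ^ 3 * (2 * real x / eps)"
    using card_U eps by (intro mult_left_mono) auto
  also have "\<dots> = (4 * eps) * (eps * real x / 2)"
    using eps by (simp add: power3_eq_cube)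
  also have "\<dots> \<le> eps * real x / 2"
    using eps by (intro mult_left_le_one_le) auto
  finally show ?thesis
    using \<open>B \<subseteq> {x..2*x}\<close> \<open>card B \<le> k\<close> unfolding U_def by blast
qed

lemma ceiling_translate_count_le:
  fixes eps :: real and x :: nat
  assumes eps: "0 < eps" "eps \<le> 1" and "1 \<le> x"
  shows "real (nat \<lceil>3 * (real x + 1) / (eps * real x powr (2/3))\<rceil>) \<le> 7 * real x powr (1/3) / eps"
proof -
  define p where "p = real x powr (2/3)"
  define K where "K = 3 * (real x + 1) / (eps * p)"
  have "0 < p" "1 \<le> real x powr (1/3)"
    using \<open>1 \<le> x\<close> by (simp_all add: p_def ge_one_powr_ge_zero)
  have "K \<le> 3 * (2 * real x) / (eps * p)"
    unfolding K_def using \<open>0 < p\<close> \<open>1 \<le> x\<close> eps by (intro divide_right_mono) auto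
  also have "real x = real x powr (1/3) * p"
    using \<open>1 \<le> x\<close> by (simp add: p_def flip: powr_add)
  also have "3 * (2 * (real x powr (1/3) * p)) / (eps * p) = 6 * real x powr (1/3) / eps"
    using \<open>0 < p\<close> by simp
  finally have "K \<le> 6 * real x powr (1/3) / eps" .
  moreover have "1 \<le> real x powr (1/3) / eps"
    using \<open>1 \<le> real x powr (1/3)\<close> eps by (simp add: field_simps)
  moreover have "real (nat \<lceil>K\<rceil>) \<le> K + 1"
    using \<open>0 < p\<close> eps unfolding K_def by (simp add: of_int_ceiling_le_add_one)
  ultimately show ?thesis
    by (simp add: K_def p_def)
qed

lemma single_scale_cover:
  fixes eps L :: real and x :: nat and A :: "nat set"
  assumes eps: "0 < eps" "eps \<le> 1/4" and "1 \<le> x" and L: "ln (1 / eps) \<le> L"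
    and dense: "\<forall>m\<in>nat_ival (2 * real x) (2 * real x / eps).
      eps * real x powr (2/3) * L < card (A \<inter> nat_ival (real m - 2 * real x) (real m - real x))"
  shows "\<exists>Bx. scale_cover eps A x Bx"
proof -
  define p where "p = real x powr (2/3)"
  define \<delta> where "\<delta> = eps * p * L / (real x + 1)"
  define k where "k = nat \<lceil>3 * (real x + 1) / (eps * p)\<rceil>"
  have "0 < p"
    using \<open>1 \<le> x\<close> by (simp add: p_def)
  have "0 < ln (1 / eps)"
    using eps by simp
  then have "0 < L"
    using L by linarith
  have reps: "\<forall>y\<in>nat_ival (2 * real x) (2 * real x / eps).
      \<delta> * (x + 1) \<le> card {b\<in>{x..2*x}. y \<in> sumset A {b}}"
  proof
    fix y assume "y \<in> nat_ival (2 * real x) (2 * real x / eps)"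
    then have "\<delta> * (x + 1) < card (A \<inter> nat_ival (real y - 2 * real x) (real y - real x))"
      using dense by (simp add: \<delta>_def p_def add.commute)
    also have "\<dots> \<le> card {b\<in>{x..2*x}. y \<in> sumset A {b}}"
      unfolding of_nat_le_iff by (rule card_window_le_translates)
    finally show "\<delta> * (x + 1) \<le> card {b\<in>{x..2*x}. y \<in> sumset A {b}}" by simp
  qed
  have cancel: "a * L / c * (3 * c / a) = 3 * L" if "a \<noteq> 0" "c \<noteq> 0" for a c :: real
    using that by (simp add: field_simps)
  have "3 * ln (1 / eps) \<le> 3 * L"
    using L by simp
  also have "\<dots> = \<delta> * (3 * (real x + 1) / (eps * p))"
    unfolding \<delta>_def using \<open>0 < p\<close> eps by (intro cancel[symmetric]) auto
  also have "\<dots> \<le> \<delta> * k"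
    using \<open>0 < L\<close> \<open>0 < p\<close> eps
    by (intro mult_left_mono) (auto simp: k_def \<delta>_def of_nat_ceiling)
  finally obtain Bx where "Bx \<subseteq> {x..2*x}" "card Bx \<le> k"
    "real (card (nat_ival (2 * real x) (2 * real x / eps) - sumset A Bx)) \<le> eps * real x / 2"
    using greedy_window_cover[OF eps \<open>1 \<le> x\<close> reps] by blast
  moreover have "real k \<le> 7 * real x powr (1/3) / eps"
    using ceiling_translate_count_le[OF eps(1) _ \<open>1 \<le> x\<close>] eps by (simp add: k_def p_def)
  ultimately show ?thesis
    unfolding scale_cover_def by auto
qed

text \<open>The additive 2 accounts for the at most two integers of \<open>[c, 2 x\<^sub>0)\<close> that lie below the
  first window.\<close>
definition gaps_bounded :: "real \<Rightarrow> real \<Rightarrow> nat set \<Rightarrow> nat set \<Rightarrow> nat \<Rightarrow> real \<Rightarrow> bool" where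
  "gaps_bounded eps c A B x \<beta> \<longleftrightarrow> (\<forall>T. c \<le> T \<longrightarrow> T \<le> 2 * real x / eps \<longrightarrow>
     real (card (nat_ival c T - sumset A B)) \<le> min (eps * T / 2) \<beta> + 2)"

lemma gaps_bounded_mono:
  "gaps_bounded eps c A B x \<beta> \<Longrightarrow> \<beta> \<le> \<beta>' \<Longrightarrow> gaps_bounded eps c A B x \<beta>'"
  unfolding gaps_bounded_def by (meson min.mono order.trans add_right_mono order_refl)

lemma gaps_bounded_first_scale:
  assumes "0 < eps" "2 \<le> c" "c \<le> 2 * real x" "2 * real x < c + 2"
    and "scale_cover eps A x Bx"
  shows "gaps_bounded eps c A Bx x (eps * real x / 2)"
  unfolding gaps_bounded_def
proof (intro allI impI)
  fix T assume "c \<le> T" "T \<le> 2 * real x / eps"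
  have "real k \<le> 2 * real x - 1 \<or> 2 * real x \<le> real k" for k
  proof (cases "k < 2 * x")
    case True
    then have "real (k + 1) \<le> real (2 * x)"
      by (simp only: of_nat_le_iff)
    then show ?thesis by simp
  qed simp
  then have "nat_ival c T - sumset A Bx
      \<subseteq> nat_ival c (2 * real x - 1) \<union> (nat_ival (2 * real x) (2 * real x / eps) - sumset A Bx)"
    using \<open>T \<le> 2 * real x / eps\<close> unfolding nat_ival_def by auto
  then have "card (nat_ival c T - sumset A Bx)
      \<le> card (nat_ival c (2 * real x - 1)) + card (nat_ival (2 * real x) (2 * real x / eps) - sumset A Bx)"
    by (rule card_le_card_Un) simp_all
  moreover have "real (card (nat_ival c (2 * real x - 1))) \<le> 2"
    using card_nat_ival_le[of c "2 * real x - 1"] assms(4) by linarith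
  moreover have "eps * real x / 2 \<le> eps * T / 2"
    using assms(1-4) \<open>c \<le> T\<close> by (intro divide_right_mono mult_left_mono) auto
  ultimately show "real (card (nat_ival c T - sumset A Bx)) \<le> min (eps * T / 2) (eps * real x / 2) + 2"
    using assms(5) unfolding scale_cover_def by linarith
qed

lemma gaps_bounded_next_scale:
  assumes "0 < eps" and overlap: "2 * real x \<le> 2 * real x' / eps" and "c \<le> 2 * real x' / eps"
    and gaps: "gaps_bounded eps c A B x' \<beta>" and slack: "\<beta> + eps * x / 2 \<le> x'"
    and "scale_cover eps A x Bx"
  shows "gaps_bounded eps c A (B \<union> Bx) x (\<beta> + eps * x / 2)"
  unfolding gaps_bounded_def
proof (intro allI impI)
  fix T assume "c \<le> T" "T \<le> 2 * real x / eps"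
  show "real (card (nat_ival c T - sumset A (B \<union> Bx))) \<le> min (eps * T / 2) (\<beta> + eps * x / 2) + 2"
  proof (cases "T \<le> 2 * real x' / eps")
    case True
    have "card (nat_ival c T - sumset A (B \<union> Bx)) \<le> card (nat_ival c T - sumset A B)"
      using sumset_mono[of B "B \<union> Bx" A] by (intro card_mono) auto
    moreover have "real (card (nat_ival c T - sumset A B)) \<le> min (eps * T / 2) \<beta> + 2"
      using gaps \<open>c \<le> T\<close> True unfolding gaps_bounded_def by blast
    moreover have "0 \<le> eps * real x / 2"
      using \<open>0 < eps\<close> by simp
    ultimately show ?thesis by linarith
  next
    case False
    have "nat_ival c T - sumset A (B \<union> Bx) \<subseteq> (nat_ival c (2 * real x' / eps) - sumset A B)
        \<union> (nat_ival (2 * real x) (2 * real x / eps) - sumset A Bx)"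
      using \<open>T \<le> 2 * real x / eps\<close> overlap unfolding nat_ival_def sumset_Un by auto
    then have "card (nat_ival c T - sumset A (B \<union> Bx))
        \<le> card (nat_ival c (2 * real x' / eps) - sumset A B)
          + card (nat_ival (2 * real x) (2 * real x / eps) - sumset A Bx)"
      by (rule card_le_card_Un) simp_all
    moreover have "real (card (nat_ival c (2 * real x' / eps) - sumset A B)) \<le> \<beta> + 2"
      using gaps \<open>c \<le> 2 * real x' / eps\<close> unfolding gaps_bounded_def by fastforce
    moreover have "real x' \<le> eps * T / 2"
      using False \<open>0 < eps\<close> by (simp add: field_simps)
    ultimately show ?thesis
      using \<open>scale_cover eps A x Bx\<close> slack unfolding scale_cover_def by linarith
  qed
qed

lemma octuple_scale_conditions:
  fixes eps :: real and x x' :: nat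
  assumes eps: "0 < eps" "eps \<le> 1/16" and "x \<le> 8 * x'"
  shows "2 * real x \<le> 2 * real x' / eps" "eps * x' + eps * x / 2 \<le> x'" "real x' \<le> real x' / eps"
proof -
  have "(8 * eps) * real x' \<le> real x'"
    using eps by (intro mult_left_le_one_le) auto
  then have "8 * real x' \<le> real x' / eps"
    using eps by (simp add: field_simps)
  moreover have "real x \<le> 8 * real x'"
    using \<open>x \<le> 8 * x'\<close> by simp
  ultimately show "2 * real x \<le> 2 * real x' / eps" "real x' \<le> real x' / eps"
    by simp_all
  have "eps * real x \<le> eps * (8 * real x')"
    using \<open>real x \<le> 8 * real x'\<close> eps by (intro mult_left_mono) auto
  moreover have "(5 * eps) * real x' \<le> real x'"
    using eps by (intro mult_left_le_one_le) auto
  ultimately show "eps * x' + eps * x / 2 \<le> x'"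
    by simp
qed

lemma cube_root_8_mult: "real (8 * y) powr (1/3) = 2 * real y powr (1/3)"
proof -
  have "(8::real) powr (1/3) = (2 powr 3) powr (1/3)"
    by simp
  also have "\<dots> = 2"
    by (simp add: powr_powr)
  finally show ?thesis
    by (simp add: powr_mult)
qed

lemma gaps_bounded_geometric_scales:
  assumes eps: "0 < eps" "eps \<le> 1/16" and c: "2 \<le> c" "c \<le> 2 * real x0" "2 * real x0 < c + 2"
    and cover: "\<And>x. x0 \<le> x \<Longrightarrow> real x \<le> M \<Longrightarrow> \<exists>Bx. scale_cover eps A x Bx"
  shows "real (x0 * 8 ^ j) \<le> M \<Longrightarrow> \<exists>B\<subseteq>{x0..2 * (x0 * 8 ^ j)}.
    real (card B) \<le> 14 * real (x0 * 8 ^ j) powr (1/3) / eps \<and>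
    gaps_bounded eps c A B (x0 * 8 ^ j) (eps * (x0 * 8 ^ j))"
proof (induction j)
  case 0
  then obtain Bx where Bx: "scale_cover eps A x0 Bx"
    using cover by auto
  then have "gaps_bounded eps c A Bx x0 (eps * x0 / 2)"
    by (rule gaps_bounded_first_scale[OF eps(1) c])
  then have "gaps_bounded eps c A Bx x0 (eps * x0)"
    by (rule gaps_bounded_mono) (simp add: eps)
  moreover have "real (card Bx) \<le> 14 * real x0 powr (1/3) / eps"
    using Bx eps unfolding scale_cover_def by (simp add: divide_right_mono)
  ultimately show ?case
    using Bx unfolding scale_cover_def by auto
next
  case (Suc j)
  define x' where "x' = x0 * 8 ^ j"
  define x where "x = 8 * x'"
  have "x = x0 * 8 ^ Suc j" "x0 \<le> x'"
    by (simp_all add: x_def x'_def)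
  have "real x \<le> M"
    using Suc.prems by (simp add: \<open>x = x0 * 8 ^ Suc j\<close>)
  then have "real x' \<le> M"
    by (simp add: x_def)
  then obtain B where "B \<subseteq> {x0..2 * x'}" and card_B: "real (card B) \<le> 14 * real x' powr (1/3) / eps"
    and gaps: "gaps_bounded eps c A B x' (eps * x')"
    using Suc.IH unfolding x'_def by blast
  obtain Bx where Bx: "scale_cover eps A x Bx"
    using cover \<open>x0 \<le> x'\<close> \<open>real x \<le> M\<close> by (fastforce simp: x_def)
  note ratio = octuple_scale_conditions[OF eps, of x x']
  have "c \<le> 2 * real x' / eps"
    using c(2) \<open>x0 \<le> x'\<close> ratio(3) by (simp add: x_def)
  then have "gaps_bounded eps c A (B \<union> Bx) x (eps * x' + eps * x / 2)"
    using gaps_bounded_next_scale[OF eps(1) _ _ gaps _ Bx] ratio by (simp add: x_def)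
  then have "gaps_bounded eps c A (B \<union> Bx) x (eps * x)"
    by (rule gaps_bounded_mono) (use eps in \<open>simp add: x_def\<close>)
  moreover have "real (card (B \<union> Bx)) \<le> 14 * real x powr (1/3) / eps"
  proof -
    have "real (card (B \<union> Bx)) \<le> 14 * real x' powr (1/3) / eps + 7 * real x powr (1/3) / eps"
      using card_Un_le[of B Bx] card_B Bx unfolding scale_cover_def by linarith
    also have "\<dots> = 14 * real x powr (1/3) / eps"
      unfolding x_def cube_root_8_mult by (simp add: field_simps)
    finally show ?thesis .
  qed
  moreover have "B \<union> Bx \<subseteq> {x0..2 * x}"
    using \<open>B \<subseteq> {x0..2 * x'}\<close> Bx \<open>x0 \<le> x'\<close> unfolding scale_cover_def x_def by auto
  ultimately show ?case
    unfolding \<open>x = x0 * 8 ^ Suc j\<close> by blast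
qed

lemma exists_geometric_scale:
  fixes a b X :: nat
  assumes "2 \<le> b" "1 \<le> a" "a \<le> X"
  shows "\<exists>J. a * b ^ J \<le> X \<and> X < a * b ^ Suc J"
proof -
  have "1 \<le> X div a"
    using div_le_mono[OF assms(3), of a] assms(2) by simp
  then obtain J where J: "b ^ J \<le> X div a" "X div a < b ^ (J + 1)"
    using ex_power_ivl1[OF assms(1)] by blast
  have "a * b ^ J \<le> a * (X div a)"
    using J(1) by simp
  also have "\<dots> \<le> X"
    by simp
  finally have lower: "a * b ^ J \<le> X" .
  have "X mod a < a"
    using assms(2) by simp
  then have "X < a * (X div a) + a"
    using mult_div_mod_eq[of a X] by linarith
  also have "\<dots> = a * (X div a + 1)"
    by simp
  also have "\<dots> \<le> a * b ^ Suc J"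
    using J(2) by (intro mult_le_mono2) simp
  finally show ?thesis
    using lower by blast
qed

lemma gaps_bounded_up_to_scale:
  assumes eps: "0 < eps" "eps \<le> 1/16" and c: "2 \<le> c" "c \<le> 2 * real x0" "2 * real x0 < c + 2"
    and "1 \<le> x0" "x0 \<le> X"
    and cover: "\<And>x. x0 \<le> x \<Longrightarrow> x \<le> X \<Longrightarrow> \<exists>Bx. scale_cover eps A x Bx"
  shows "\<exists>B\<subseteq>{x0..2 * X}. real (card B) \<le> 21 * real X powr (1/3) / eps \<and>
    gaps_bounded eps c A B X (2 * eps * X)"
proof -
  obtain J where J: "x0 * 8 ^ J \<le> X" "X < x0 * 8 ^ Suc J"
    using exists_geometric_scale[OF _ \<open>1 \<le> x0\<close> \<open>x0 \<le> X\<close>, of 8] by auto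
  define xJ where "xJ = x0 * 8 ^ J"
  have "x0 \<le> xJ" "xJ \<le> X" "X \<le> 8 * xJ"
    using J by (simp_all add: xJ_def)
  have cover': "\<exists>Bx. scale_cover eps A x Bx" if "x0 \<le> x" "real x \<le> real X" for x
    using cover that by simp
  have "real xJ \<le> real X"
    using \<open>xJ \<le> X\<close> by simp
  then obtain B where B: "B \<subseteq> {x0..2 * xJ}" "real (card B) \<le> 14 * real xJ powr (1/3) / eps"
    and gaps_B: "gaps_bounded eps c A B xJ (eps * xJ)"
    using gaps_bounded_geometric_scales[OF eps c cover'] unfolding xJ_def by blast
  obtain Bx where Bx: "scale_cover eps A X Bx"
    using cover \<open>x0 \<le> X\<close> by blast
  note ratio = octuple_scale_conditions[OF eps \<open>X \<le> 8 * xJ\<close>]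
  have "c \<le> 2 * real xJ / eps"
    using c(2) \<open>x0 \<le> xJ\<close> ratio(3) by simp
  then have gaps: "gaps_bounded eps c A (B \<union> Bx) X (eps * xJ + eps * X / 2)"
    by (rule gaps_bounded_next_scale[OF eps(1) ratio(1) _ gaps_B ratio(2) Bx])
  have "eps * xJ \<le> eps * X" "0 \<le> eps * X"
    using \<open>real xJ \<le> real X\<close> eps by (simp_all add: mult_left_mono)
  then have "eps * xJ + eps * X / 2 \<le> 2 * eps * X"
    by linarith
  with gaps have "gaps_bounded eps c A (B \<union> Bx) X (2 * eps * X)"
    by (rule gaps_bounded_mono)
  moreover have "real (card (B \<union> Bx)) \<le> 21 * real X powr (1/3) / eps"
  proof -
    have "real xJ powr (1/3) / eps \<le> real X powr (1/3) / eps"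
      using \<open>real xJ \<le> real X\<close> eps by (simp add: divide_right_mono powr_mono2)
    then show ?thesis
      using card_Un_le[of B Bx] B(2) Bx unfolding scale_cover_def by linarith
  qed
  moreover have "B \<union> Bx \<subseteq> {x0..2 * X}"
    using B(1) Bx \<open>xJ \<le> X\<close> \<open>x0 \<le> X\<close> unfolding scale_cover_def by auto
  ultimately show ?thesis
    by blast
qed

lemma gaps_bounded_imp_few_gaps:
  assumes "0 < eps" and gaps: "gaps_bounded eps c A B X \<beta>" and slack: "\<beta> + 3 + 2 / eps \<le> 2 * X"
    and c: "4 \<le> eps * c" "c \<le> 2 * real X / eps"
    and T: "c \<le> T" "T \<le> 2 * (real X + 1) / eps"
  shows "real (card (nat_ival c T - sumset A B)) \<le> eps * T"
proof (cases "T \<le> 2 * real X / eps")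
  case True
  then have "real (card (nat_ival c T - sumset A B)) \<le> eps * T / 2 + 2"
    using gaps T(1) unfolding gaps_bounded_def by fastforce
  moreover have "eps * c \<le> eps * T"
    using T(1) \<open>0 < eps\<close> by simp
  ultimately show ?thesis
    using c(1) by linarith
next
  case False
  have "nat_ival c T - sumset A B
      \<subseteq> (nat_ival c (2 * real X / eps) - sumset A B) \<union> nat_ival (2 * real X / eps) T"
    unfolding nat_ival_def by auto
  then have "card (nat_ival c T - sumset A B)
      \<le> card (nat_ival c (2 * real X / eps) - sumset A B) + card (nat_ival (2 * real X / eps) T)"
    by (rule card_le_card_Un) simp_all
  moreover have "real (card (nat_ival c (2 * real X / eps) - sumset A B)) \<le> \<beta> + 2"
    using gaps c(2) unfolding gaps_bounded_def by fastforce
  moreover have "real (card (nat_ival (2 * real X / eps) T)) \<le> 2 / eps + 1"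
    using card_nat_ival_le[of "2 * real X / eps" T] T(2) False \<open>0 < eps\<close>
    by (simp add: add_divide_distrib)
  moreover have "2 * X \<le> eps * T"
    using False \<open>0 < eps\<close> by (simp add: field_simps)
  ultimately show ?thesis
    using slack by linarith
qed

lemma last_scale_slack:
  fixes eps :: real and X :: nat
  assumes eps: "0 < eps" "eps \<le> 1/16" and "3 / eps \<le> X"
  shows "2 * eps * X + 3 + 2 / eps \<le> 2 * X"
proof -
  have "(2 * eps) * X \<le> (1 / 8) * X"
    using eps by (intro mult_right_mono) auto
  moreover have "3 + 2 / eps \<le> 5 / eps"
    using eps by (simp add: field_simps)
  moreover have "5 / eps \<le> 15 / 8 * (3 / eps)"
    using eps by (simp add: field_simps)
  ultimately show ?thesis
    using assms(3) by linarith
qed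

lemma scale_cover_if_dense_windows:
  fixes eps :: real and n x :: nat and A :: "nat set"
  assumes eps: "0 < eps" "eps \<le> 1/4" and x: "1 \<le> x" "real n powr (1/3) \<le> x" "x \<le> eps * n"
    and dense: "\<forall>x\<in>nat_ival (real n powr (1/3)) (eps * real n).
         \<forall>m\<in>nat_ival (2 * real x) (2 * real x / eps).
           real (card (A \<inter> nat_ival (real m - 2 * real x) (real m - real x)))
             > eps * real x powr (2/3) * ln (real n / real x)"
  shows "\<exists>Bx. scale_cover eps A x Bx"
proof (rule single_scale_cover[OF eps x(1)])
  have "1 / eps \<le> real n / real x"
    using x eps by (simp add: field_simps)
  then show "ln (1 / eps) \<le> ln (real n / real x)"
    by (rule ln_mono) (simp add: eps)
  show "\<forall>m\<in>nat_ival (2 * real x) (2 * real x / eps).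
      eps * real x powr (2/3) * ln (real n / real x)
        < card (A \<inter> nat_ival (real m - 2 * real x) (real m - real x))"
    using dense x unfolding nat_ival_def by auto
qed

lemma cube_root_cubed: "(real n powr (1/3)) ^ 3 = real n"
proof (cases "n = 0")
  case False
  then have "(real n powr (1/3)) ^ 3 = (real n powr (1/3)) powr 3"
    by simp
  also have "\<dots> = real n"
    by (simp add: powr_powr)
  finally show ?thesis .
qed simp

lemma eps_mult_cube_root_ge_2:
  fixes eps :: real and n :: nat
  assumes "0 < eps" "8 \<le> eps ^ 3 * n"
  shows "2 \<le> eps * real n powr (1/3)"
proof -
  have "2 ^ 3 \<le> (eps * real n powr (1/3)) ^ 3"
    using assms(2) by (simp add: power_mult_distrib cube_root_cubed)
  moreover have "2 ^ 3 \<le> (eps * real n powr (1/3)) ^ 3 \<longleftrightarrow> 2 \<le> eps * real n powr (1/3)"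
    by (rule power_mono_iff) (use assms(1) in simp_all)
  ultimately show ?thesis
    by simp
qed

lemma cube_root_bounds:
  fixes eps :: real and n :: nat
  assumes eps: "0 < eps" "eps \<le> 1" and r: "2 \<le> eps * real n powr (1/3)"
  shows "real n powr (1/3) + 1 \<le> eps * n" "3 / eps + 1 \<le> eps * n"
proof -
  define r where "r = real n powr (1/3)"
  have "2 / eps \<le> r" "2 \<le> 2 / eps"
    using r eps by (simp_all add: r_def field_simps)
  then have "2 \<le> r"
    by linarith
  have "eps * n = (eps * r) * r ^ 2"
    using cube_root_cubed[of n] by (simp add: r_def power2_eq_square power3_eq_cube)
  also have "\<dots> \<ge> 2 * r ^ 2"
    using r by (intro mult_right_mono) (auto simp: r_def)
  finally have "2 * r ^ 2 \<le> eps * n" .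
  have "2 * r \<le> r * r"
    using \<open>2 \<le> r\<close> by (intro mult_right_mono) auto
  then have "r + 1 \<le> 2 * r ^ 2"
    using \<open>2 \<le> r\<close> unfolding power2_eq_square by linarith
  with \<open>2 * r ^ 2 \<le> eps * n\<close> show "real n powr (1/3) + 1 \<le> eps * n"
    by (simp add: r_def)
  have "(2 / eps) * 2 \<le> r * r"
    using \<open>2 / eps \<le> r\<close> \<open>2 \<le> r\<close> eps by (intro mult_mono) auto
  moreover have "3 / eps + 1 \<le> 2 * (2 / eps) * 2"
    using eps by (simp add: field_simps)
  ultimately show "3 / eps + 1 \<le> eps * n"
    using \<open>2 * r ^ 2 \<le> eps * n\<close> unfolding power2_eq_square by linarith
qed

lemma cube_root_div_le:
  fixes eps :: real and n X :: nat
  assumes "0 < eps" "real X \<le> eps * n"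
  shows "real X powr (1/3) / eps \<le> eps powr (-2/3) * real n powr (1/3)"
proof -
  have "real X powr (1/3) \<le> (eps * n) powr (1/3)"
    using assms by (intro powr_mono2) auto
  also have "\<dots> = eps powr (1/3) * real n powr (1/3)"
    using assms(1) by (simp add: powr_mult)
  also have "eps powr (1/3) = eps powr (-2/3) * eps"
    using powr_add[of eps "-2/3" 1] assms(1) by simp
  finally show ?thesis
    using assms(1) by (simp add: field_simps)
qed

lemma eps_cube_mult_ge_8:
  fixes eps :: real and n :: nat
  assumes "0 < eps" "eps \<le> 1" "10^5 * eps powr (-9/2) < n"
  shows "8 \<le> eps ^ 3 * n"
proof -
  have "1 \<le> eps powr (-3/2)"
    using powr_mono2'[of "-3/2" eps 1] assms(1,2) by simp
  have "eps ^ 3 = eps powr 3"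
    using assms(1) by (simp add: powr_numeral)
  then have "eps ^ 3 * eps powr (-9/2) = eps powr (3 + (-9/2))"
    by (simp only: powr_add)
  also have "3 + (-9/2) = (-3/2 :: real)"
    by simp
  finally have "eps ^ 3 * eps powr (-9/2) = eps powr (-3/2)" .
  then have "10^5 \<le> eps ^ 3 * (10^5 * eps powr (-9/2))"
    using \<open>1 \<le> eps powr (-3/2)\<close> by simp
  also have "\<dots> \<le> eps ^ 3 * n"
    using assms by (intro mult_left_mono) auto
  finally show ?thesis by simp
qed

theorem exists_small_sumset_cover:
  fixes eps :: real and n :: nat and A :: "nat set"
  assumes eps: "0 < eps" "eps \<le> 1/16" and n: "8 \<le> eps ^ 3 * n"
    and dense: "\<forall>x\<in>nat_ival (real n powr (1/3)) (eps * real n).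
         \<forall>m\<in>nat_ival (2 * real x) (2 * real x / eps).
           real (card (A \<inter> nat_ival (real m - 2 * real x) (real m - real x)))
             > eps * real x powr (2/3) * ln (real n / real x)"
  shows "\<exists>B. B \<subseteq> nat_ival (real n powr (1/3)) (2 * eps * real n) \<and>
    real (card B) \<le> 21 * eps powr (-2/3) * real n powr (1/3) \<and>
    (\<forall>t\<in>nat_ival (2 * real n powr (1/3)) (2 * real n).
       real (card (nat_ival (2 * real n powr (1/3)) (real t) - sumset A B)) \<le> eps * real t)"
proof -
  define r where "r = real n powr (1/3)"
  define x0 where "x0 = nat \<lceil>r\<rceil>"
  define X where "X = nat \<lfloor>eps * n\<rfloor>"
  have eps_r: "2 \<le> eps * r"
    using eps_mult_cube_root_ge_2[OF eps(1) n] by (simp add: r_def)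
  then have n_large: "r + 1 \<le> eps * n" "3 / eps + 1 \<le> eps * n"
    using cube_root_bounds[OF eps(1)] eps by (simp_all add: r_def)
  have "2 \<le> r"
    using eps_r eps mult_left_le_one_le[of r eps] by (simp add: r_def)
  have x0: "r \<le> x0" "x0 < r + 1"
    using \<open>2 \<le> r\<close> by (simp_all add: x0_def) linarith
  have X: "X \<le> eps * n" "eps * n < X + 1"
    using eps by (simp_all add: X_def) linarith
  have "1 \<le> x0" "x0 \<le> X"
    using x0 n_large(1) \<open>2 \<le> r\<close> by (simp_all add: X_def le_nat_floor)
  have "\<exists>Bx. scale_cover eps A x Bx" if "x0 \<le> x" "x \<le> X" for x
    using scale_cover_if_dense_windows[OF _ _ _ _ _ dense] that x0 X(1) \<open>1 \<le> x0\<close> eps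
    by (simp add: r_def)
  moreover have c: "2 \<le> 2 * r" "2 * r \<le> 2 * real x0" "2 * real x0 < 2 * r + 2"
    using x0 \<open>2 \<le> r\<close> by auto
  ultimately obtain B where B: "B \<subseteq> {x0..2 * X}" "real (card B) \<le> 21 * real X powr (1/3) / eps"
    and gaps: "gaps_bounded eps (2 * r) A B X (2 * eps * X)"
    using gaps_bounded_up_to_scale[OF eps c \<open>1 \<le> x0\<close> \<open>x0 \<le> X\<close>] by blast
  have "B \<subseteq> nat_ival r (2 * eps * n)"
    using B(1) x0(1) X(1) unfolding nat_ival_def by (auto dest!: of_nat_mono[where 'a = real])
  moreover have "real (card B) \<le> 21 * eps powr (-2/3) * r"
    using B(2) cube_root_div_le[OF eps(1) X(1)] by (simp add: r_def)
  moreover have "real (card (nat_ival (2 * r) (real t) - sumset A B)) \<le> eps * real t"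
    if "t \<in> nat_ival (2 * r) (2 * real n)" for t
  proof (rule gaps_bounded_imp_few_gaps[OF eps(1) gaps])
    show "2 * eps * X + 3 + 2 / eps \<le> 2 * X"
      using last_scale_slack[OF eps] X n_large(2) by simp
    have "real X \<le> real X / eps"
      using eps mult_left_le_one_le[of "real X" eps] by (simp add: field_simps)
    then show "4 \<le> eps * (2 * r)" "2 * r \<le> 2 * real X / eps"
      using eps_r x0 \<open>x0 \<le> X\<close> by auto
    have "2 * real n \<le> 2 * (real X + 1) / eps"
      using X(2) eps by (simp add: field_simps)
    then show "2 * r \<le> real t" "real t \<le> 2 * (real X + 1) / eps"
      using that unfolding nat_ival_def by auto
  qed
  ultimately show ?thesis
    unfolding r_def by blast
qed

theorem lemma5p1:
  shows "\<exists>eps0::real. \<exists>C::real. 0 < eps0 \<and> eps0 < 1/2 \<and> 0 < C \<and>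
    (\<forall>eps::real. \<forall>n::nat. \<forall>A::nat set.
      0 < eps \<and> eps < eps0 \<and> real n > 10^5 * eps powr (-9/2) \<and>
      (\<forall>x\<in>nat_ival (real n powr (1/3)) (eps * real n).
         \<forall>m\<in>nat_ival (2 * real x) (2 * real x / eps).
           real (card (A \<inter> nat_ival (real m - 2 * real x) (real m - real x)))
             > eps * real x powr (2/3) * ln (real n / real x))
      \<longrightarrow> (\<exists>B. B \<subseteq> nat_ival (real n powr (1/3)) (2 * eps * real n) \<and>
              real (card B) \<le> C * eps powr (-2/3) * real n powr (1/3) \<and>
              (\<forall>t\<in>nat_ival (2 * real n powr (1/3)) (2 * real n).
                 real (card (nat_ival (2 * real n powr (1/3)) (real t) - sumset A B))
                   \<le> eps * real t)))"
proof (rule exI[of _ "1/16"], rule exI[of _ 21], intro conjI allI impI)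
  fix eps :: real and n :: nat and A :: "nat set"
  assume hyp: "0 < eps \<and> eps < 1/16 \<and> real n > 10^5 * eps powr (-9/2) \<and>
      (\<forall>x\<in>nat_ival (real n powr (1/3)) (eps * real n).
         \<forall>m\<in>nat_ival (2 * real x) (2 * real x / eps).
           real (card (A \<inter> nat_ival (real m - 2 * real x) (real m - real x)))
             > eps * real x powr (2/3) * ln (real n / real x))"
  then have "8 \<le> eps ^ 3 * n"
    by (intro eps_cube_mult_ge_8) auto
  with hyp show "\<exists>B. B \<subseteq> nat_ival (real n powr (1/3)) (2 * eps * real n) \<and>
      real (card B) \<le> 21 * eps powr (-2/3) * real n powr (1/3) \<and>
      (\<forall>t\<in>nat_ival (2 * real n powr (1/3)) (2 * real n).
         real (card (nat_ival (2 * real n powr (1/3)) (real t) - sumset A B)) \<le> eps * real t)"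
    by (intro exists_small_sumset_cover) auto
qed simp_all

end
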